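(* Assume (RHS.1), (RHS.2), (BC.1), (BC.2), and, if (RHS.2b) holds, condition (M.1). Let $u^0_{\mathfrak h}\in\mathbb V_h$ be any function with $u^0_{\mathfrak h}(z)=\tilde g_\varepsilon(z)$ for all $z\in\mathcal N_h^b$, and define $u^{n+1}_{\mathfrak h}\in\mathbb V_h$ for $n\ge0$ by $$u^{n+1}_{\mathfrak h}(z)=\tfrac12\Big[\varepsilon^2f(z)+\max_{x\in\mathcal N_{\mathfrak h}(z)}u^n_{\mathfrak h}(x)+\min_{x\in\mathcal N_{\mathfrak h}(z)}u^n_{\mathfrak h}(x)\Big]\ \ (z\in\mathcal N_h^I),\qquad u^{n+1}_{\mathfrak h}(z)=\tilde g_\varepsilon(z)\ \ (z\in\mathcal N_h^b).$$ Then the sequence $\{u^n_{\mathfrak h}\}_{n\ge0}$ converges to $u_{\mathfrak h}$, the solution of the discrete problem.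
   Context: Setting: $\Omega\subset\mathbb R^d$ ($d\ge1$) is a bounded domain with continuous boundary. For $r>0$, $\Omega^{(r)}=\{x\in\Omega:\operatorname{dist}(x,\partial\Omega)>r\}$. $\mathcal T_h$ is a mesh of closed simplices, $h=\max_T\operatorname{diam}T$, $\Omega_h$ the interior of the union of the simplices, with $\Omega^{(h)}\subset\Omega_h\subset\Omega$; $\mathcal N_h$ the set of vertices. $\mathbb V_h$: continuous piecewise linear functions on $\mathcal T_h$ (determined by nodal values), hat basis $\{\hat\varphi_z\}$, Lagrange interpolant $\mathcal I_h$. Parameters $\mathfrak h=(h,\varepsilon,\theta)$, $\varepsilon\in[h,\operatorname{diam}\Omega]$, $0<\theta\le1$. $\mathcal N_h^I=\mathcal N_h\cap\Omega^{(2\varepsilon)}$, $\mathcal N_h^b=\mathcal N_h\setminus\mathcal N_h^I$. $\mathbb S_\theta$: finite symmetric subset of the unit sphere $\mathbb S$ such that each $v\in\mathbb S$ has $v_\theta\in\mathbb S_\theta$ with $|v-v_\theta|\le\theta$. For $z\in\mathcal N_h^I$, $\mathcal N_{\mathfrak h}(z)=\{z\}\cup\{z+\varepsilon v_\theta:v_\theta\in\mathbb S_\theta\}$, $-\Delta^\diamond_{\infty,\mathfrak h}w(z)=\varepsilon^{-2}\big(2w(z)-\max_{x\in\mathcal N_{\mathfrak h}(z)}\mathcal I_hw(x)-\min_{x\in\mathcal N_{\mathfrak h}(z)}\mathcal I_hw(x)\big)$, $\widetilde{\mathcal N}_{\mathfrak h}(z)=\{z\}\cup\{z'\in\mathcal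 N_h:\exists v_\theta\in\mathbb S_\theta,\ \hat\varphi_{z'}(z+\varepsilon v_\theta)>0\}$. Assumptions: (RHS.1) $f\in C(\Omega)\cap L^\infty(\Omega)$. (RHS.2) either (RHS.2a) $\sup_\Omega f<0$ or $\inf_\Omega f>0$, or (RHS.2b) $f\equiv0$. (BC.1) $g\in C(\partial\Omega)$. (BC.2) for every $\varepsilon>0$ a function $\tilde g_\varepsilon\in C(\overline\Omega)$ approximating $g$ is given (with $\tilde g_\varepsilon\in C^{0,\alpha}(\overline\Omega)$ and $\|g-\tilde g_\varepsilon\|_{L^\infty(\partial\Omega)}\le C\varepsilon^\alpha$ whenever $g\in C^{0,\alpha}(\partial\Omega)$, $\alpha\in[0,1]$). (M.1) for every nonempty $S\subset\mathcal N_h^I$ there are $z\in S$, $z'\in\mathcal N_h\setminus S$ with $z'\in\widetilde{\mathcal N}_{\mathfrak h}(z)$. Discrete problem: find $u_{\mathfrak h}\in\mathbb V_h$ with $-\Delta^\diamond_{\infty,\mathfrak h}u_{\mathfrak h}(z)=f(z)$ for $z\in\mathcal N_h^I$ and $u_{\mathfrak h}(z)=\tilde g_\varepsilon(z)$ for $z\in\mathcal N_h^b$. *)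

theory Defs
  imports "HOL-Analysis.Analysis"
begin

definition inner_set :: "'a::euclidean_space set \<Rightarrow> real \<Rightarrow> 'a set" where
  "inner_set \<Omega> r = {x \<in> \<Omega>. infdist x (frontier \<Omega>) > r}"

definition continuous_boundary :: "'a::euclidean_space set \<Rightarrow> bool" where
  "continuous_boundary \<Omega> \<longleftrightarrow>
     (\<forall>x\<in>frontier \<Omega>. \<exists>e U (\<phi>::'a \<Rightarrow> real).
        norm e = 1 \<and> open U \<and> x \<in> U \<and> continuous_on UNIV \<phi> \<and>
        (\<forall>y t. \<phi> (y + t *\<^sub>R e) = \<phi> y) \<and>
        \<Omega> \<inter> U = {y \<in> U. y \<bullet> e < \<phi> y})"

(* a (closed, nondegenerate) simplex is given by its set of vertices *)
definition simplex_vertices :: "'a::euclidean_space set \<Rightarrow> bool" where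
  "simplex_vertices T \<longleftrightarrow> finite T \<and> card T = DIM('a) + 1 \<and> \<not> affine_dependent T"

definition conforming_mesh :: "'a::euclidean_space set set \<Rightarrow> bool" where
  "conforming_mesh M \<longleftrightarrow> finite M \<and> M \<noteq> {} \<and> (\<forall>T\<in>M. simplex_vertices T) \<and>
     (\<forall>T1\<in>M. \<forall>T2\<in>M. convex hull T1 \<inter> convex hull T2 = convex hull (T1 \<inter> T2))"

definition mesh_size :: "'a::euclidean_space set set \<Rightarrow> real" where
  "mesh_size M = Max ((\<lambda>T. diameter (convex hull T)) ` M)"

definition mesh_union :: "'a::euclidean_space set set \<Rightarrow> 'a set" where
  "mesh_union M = (\<Union>T\<in>M. convex hull T)"

definition mesh_domain :: "'a::euclidean_space set set \<Rightarrow> 'a set" where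
  "mesh_domain M = interior (mesh_union M)"

definition mesh_nodes :: "'a::euclidean_space set set \<Rightarrow> 'a set" where
  "mesh_nodes M = \<Union> M"

(* V_h: continuous piecewise linear functions (affine on each simplex);
   extended by 0 outside the triangulated region so that they are determined
   by their nodal values *)
definition P1 :: "'a::euclidean_space set set \<Rightarrow> ('a \<Rightarrow> real) set" where
  "P1 M = {w. continuous_on (mesh_union M) w \<and>
              (\<forall>T\<in>M. \<exists>c b. \<forall>x\<in>convex hull T. w x = c \<bullet> x + b) \<and>
              (\<forall>x. x \<notin> mesh_union M \<longrightarrow> w x = 0)}"

definition hat :: "'a::euclidean_space set set \<Rightarrow> 'a \<Rightarrow> 'a \<Rightarrow> real" where
  "hat M z = (THE w. w \<in> P1 M \<and> (\<forall>y\<in>mesh_nodes M. w y = (if y = z then 1 else 0)))"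

definition theta_net :: "'a::euclidean_space set \<Rightarrow> real \<Rightarrow> bool" where
  "theta_net S \<theta> \<longleftrightarrow> finite S \<and> S \<subseteq> sphere 0 1 \<and> (\<forall>v\<in>S. - v \<in> S) \<and>
     (\<forall>v\<in>sphere 0 1. \<exists>vt\<in>S. norm (v - vt) \<le> \<theta>)"

definition stencil :: "real \<Rightarrow> 'a::euclidean_space set \<Rightarrow> 'a \<Rightarrow> 'a set" where
  "stencil \<epsilon> S z = insert z ((\<lambda>v. z + \<epsilon> *\<^sub>R v) ` S)"

definition interior_nodes :: "'a::euclidean_space set \<Rightarrow> 'a set set \<Rightarrow> real \<Rightarrow> 'a set" where
  "interior_nodes \<Omega> M \<epsilon> = mesh_nodes M \<inter> inner_set \<Omega> (2 * \<epsilon>)"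

definition boundary_nodes :: "'a::euclidean_space set \<Rightarrow> 'a set set \<Rightarrow> real \<Rightarrow> 'a set" where
  "boundary_nodes \<Omega> M \<epsilon> = mesh_nodes M - interior_nodes \<Omega> M \<epsilon>"

(* - Delta^diamond_{infty,h} w (z), for w in V_h (so that I_h w = w) *)
definition disc_inf_lap :: "real \<Rightarrow> 'a::euclidean_space set \<Rightarrow> ('a \<Rightarrow> real) \<Rightarrow> 'a \<Rightarrow> real" where
  "disc_inf_lap \<epsilon> S w z =
     (2 * w z - Max (w ` stencil \<epsilon> S z) - Min (w ` stencil \<epsilon> S z)) / \<epsilon>\<^sup>2"

definition ext_stencil :: "'a::euclidean_space set set \<Rightarrow> real \<Rightarrow> 'a set \<Rightarrow> 'a \<Rightarrow> 'a set" where
  "ext_stencil M \<epsilon> S z =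
     insert z {z' \<in> mesh_nodes M. \<exists>v\<in>S. hat M z' (z + \<epsilon> *\<^sub>R v) > 0}"

definition cond_M1 :: "'a::euclidean_space set \<Rightarrow> 'a set set \<Rightarrow> real \<Rightarrow> 'a set \<Rightarrow> bool" where
  "cond_M1 \<Omega> M \<epsilon> S \<longleftrightarrow>
     (\<forall>S'. S' \<subseteq> interior_nodes \<Omega> M \<epsilon> \<and> S' \<noteq> {} \<longrightarrow>
        (\<exists>z\<in>S'. \<exists>z'\<in>mesh_nodes M - S'. z' \<in> ext_stencil M \<epsilon> S z))"

definition holder_on :: "real \<Rightarrow> 'a::euclidean_space set \<Rightarrow> ('a \<Rightarrow> real) \<Rightarrow> bool" where
  "holder_on \<alpha> A g \<longleftrightarrow> continuous_on A g \<and> bounded (g ` A) \<and>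
     (\<exists>L. \<forall>x\<in>A. \<forall>y\<in>A. \<bar>g x - g y\<bar> \<le> L * dist x y powr \<alpha>)"

definition discrete_solution ::
  "'a::euclidean_space set \<Rightarrow> 'a set set \<Rightarrow> real \<Rightarrow> 'a set \<Rightarrow> ('a \<Rightarrow> real) \<Rightarrow> ('a \<Rightarrow> real)
     \<Rightarrow> ('a \<Rightarrow> real) \<Rightarrow> bool" where
  "discrete_solution \<Omega> M \<epsilon> S f gt w \<longleftrightarrow>
     w \<in> P1 M \<and>
     (\<forall>z\<in>interior_nodes \<Omega> M \<epsilon>. disc_inf_lap \<epsilon> S w z = f z) \<and>
     (\<forall>z\<in>boundary_nodes \<Omega> M \<epsilon>. w z = gt z)"

end

theory Submission
  imports Defs
begin

(* The iteration is u^(n+1) = Phi(u^n) for a map Phi on nodal values which is monotone and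
   satisfies Phi(a + c) <= Phi(a) + c for constants c >= 0, because P1 interpolation forms
   convex combinations of nodal values (or vanishes off the mesh). A convex quadratic
   K |x|^2 - L with K >= |f| and L large lies below its interpolant, and the symmetric stencil
   sees its curvature, so it is a subsolution below u^0; by the symmetry u -> -u there is a
   supersolution above u^0. Iterating Phi from these gives monotone bounded sequences, whose
   limits are fixed points, i.e. discrete solutions, and which squeeze u^n. The two limits agree
   because solutions are unique: for f of one sign compare with the strict subsolutions
   t a - (1 - t) G and let t -> 1; for f = 0 use a strong maximum principle, where (M.1)
   prevents the set of maximal nodes from being closed under the stencils. Nodal convergence of
   P1 functions is uniform convergence. *)

lemma affine_combination_inner:
  fixes c :: "'a::real_inner"
  assumes "sum \<mu> X = 1"
  shows "c \<bullet> (\<Sum>x\<in>X. \<mu> x *\<^sub>R x) + b = (\<Sum>x\<in>X. \<mu> x * (c \<bullet> x + b))"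
proof -
  have "(\<Sum>x\<in>X. \<mu> x * (c \<bullet> x + b)) = (\<Sum>x\<in>X. \<mu> x * (c \<bullet> x)) + (\<Sum>x\<in>X. \<mu> x) * b"
    by (simp add: distrib_left sum.distrib sum_distrib_right)
  then show ?thesis using assms by (simp add: inner_sum_right)
qed

lemma affine_eq_on_convex_hull:
  fixes c c' :: "'a::euclidean_space"
  assumes "finite T" "\<forall>t\<in>T. c \<bullet> t + b = c' \<bullet> t + b'" "y \<in> convex hull T"
  shows "c \<bullet> y + b = c' \<bullet> y + b'"
proof -
  obtain \<mu> where \<mu>: "sum \<mu> T = 1" "(\<Sum>x\<in>T. \<mu> x *\<^sub>R x) = y"
    using convex_hull_finite assms(1,3) by blast
  have "c \<bullet> y + b = (\<Sum>x\<in>T. \<mu> x * (c \<bullet> x + b))"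
    using affine_combination_inner[OF \<mu>(1)] \<mu>(2) by metis
  also have "\<dots> = (\<Sum>x\<in>T. \<mu> x * (c' \<bullet> x + b'))" using assms(2) by (intro sum.cong) auto
  also have "\<dots> = c' \<bullet> y + b'" using affine_combination_inner[OF \<mu>(1)] \<mu>(2) by metis
  finally show ?thesis .
qed

lemma affine_interpolation:
  fixes T :: "'a::euclidean_space set"
  assumes "\<not> affine_dependent T"
  shows "\<exists>c b. \<forall>t\<in>T. c \<bullet> t + b = a t"
proof (cases "T = {}")
  case False
  then obtain t0 where t0: "t0 \<in> T" by auto
  have "\<not> affine_dependent (insert t0 (T - {t0}))"
    using assms t0 by (simp add: insert_absorb)
  moreover have "t0 \<notin> T - {t0}" by simp
  ultimately have ind: "independent ((\<lambda>x. - t0 + x) ` (T - {t0}))"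
    using affine_dependent_iff_dependent by blast
  then obtain h where h: "linear h" "\<forall>x\<in>(\<lambda>x. - t0 + x) ` (T - {t0}). h x = a (t0 + x) - a t0"
    using linear_independent_extend[OF ind, of "\<lambda>x. a (t0 + x) - a t0"] by blast
  \<comment> \<open>adjoint h 1 is the Riesz representative of the functional h\<close>
  have h_inner: "h x = x \<bullet> adjoint h 1" for x
    using adjoint_works[OF h(1), of x 1] by simp
  have "adjoint h 1 \<bullet> t + (a t0 - adjoint h 1 \<bullet> t0) = a t" if "t \<in> T" for t
  proof (cases "t = t0")
    case False
    then have "h (- t0 + t) = a t - a t0" using h(2) that by auto
    then show ?thesis by (simp add: h_inner inner_commute inner_diff_left)
  qed simp
  then show ?thesis by blast
qed simp

lemma norm_sq_le_weighted_sum: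
  fixes X :: "'a::real_inner set"
  assumes "finite X" "\<forall>n\<in>X. 0 \<le> w n" "sum w X = 1" "y = (\<Sum>n\<in>X. w n *\<^sub>R n)"
  shows "(norm y)\<^sup>2 \<le> (\<Sum>n\<in>X. w n * (norm n)\<^sup>2)"
proof -
  have "0 \<le> (\<Sum>n\<in>X. w n * (norm (n - y))\<^sup>2)" using assms(2) by (simp add: sum_nonneg)
  also have "\<dots> = (\<Sum>n\<in>X. w n * (norm n)\<^sup>2 - 2 * (w n * (n \<bullet> y)) + w n * (y \<bullet> y))"
    by (intro sum.cong) (auto simp: power2_norm_eq_inner inner_diff_left inner_diff_right
        inner_commute algebra_simps)
  also have "\<dots> = (\<Sum>n\<in>X. w n * (norm n)\<^sup>2) - 2 * (\<Sum>n\<in>X. w n * (n \<bullet> y)) + (\<Sum>n\<in>X. w n) * (y \<bullet> y)"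
    by (simp add: sum.distrib sum_subtractf sum_distrib_left sum_distrib_right)
  also have "(\<Sum>n\<in>X. w n * (n \<bullet> y)) = y \<bullet> y"
    unfolding assms(4) by (simp add: inner_sum_left)
  finally show ?thesis using assms(3) by (simp add: power2_norm_eq_inner)
qed

lemma norm_add_scaleR_unit_sq:
  fixes z v :: "'a::real_inner"
  assumes "norm v = 1"
  shows "(norm (z + e *\<^sub>R v))\<^sup>2 = (norm z)\<^sup>2 + 2 * e * (v \<bullet> z) + e\<^sup>2"
proof -
  have "v \<bullet> v = 1" using assms by (simp add: power2_norm_eq_inner[symmetric])
  then show ?thesis
    unfolding power2_norm_eq_inner
    by (simp add: inner_add_left inner_add_right inner_commute algebra_simps power2_eq_square)
qed

lemma mesh_size_pos:
  assumes "conforming_mesh (M :: 'a::euclidean_space set set)"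
  shows "0 < mesh_size M"
proof -
  obtain T where T: "T \<in> M" using assms unfolding conforming_mesh_def by auto
  have T_fin: "finite T" and T_card: "card T = DIM('a) + 1"
    using assms T unfolding conforming_mesh_def simplex_vertices_def by auto
  obtain x where x: "x \<in> T" using T_card by fastforce
  have "card (T - {x}) = DIM('a)" using T_fin T_card x by simp
  then have "T - {x} \<noteq> {}" using DIM_positive[where 'a='a] by (metis card.empty less_irrefl)
  then obtain y where y: "y \<in> T" "y \<noteq> x" by blast
  then have "0 < dist x y" by simp
  also have "\<dots> \<le> diameter (convex hull T)"
    using diameter_bounded_bound[OF finite_imp_bounded_convex_hull[OF T_fin]] x y
      hull_subset[of T convex] by blast
  also have "\<dots> \<le> mesh_size M"
    unfolding mesh_size_def using T assms unfolding conforming_mesh_def by (intro Max_ge) auto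
  finally show ?thesis .
qed

lemma theta_net_nonempty:
  assumes "theta_net (S :: 'a::euclidean_space set) \<theta>"
  shows "S \<noteq> {}"
proof -
  obtain b :: 'a where "b \<in> Basis" using nonempty_Basis by blast
  then have "b \<in> sphere 0 1" by simp
  then show ?thesis using assms unfolding theta_net_def by blast
qed

section \<open>Nodal interpolation on a simplicial mesh\<close>

locale simplicial_mesh =
  fixes M :: "'a::euclidean_space set set"
  assumes conforming: "conforming_mesh M"
begin

abbreviation N :: "'a set" where "N \<equiv> mesh_nodes M"

lemma finite_nodes: "finite N"
  using conforming unfolding conforming_mesh_def simplex_vertices_def mesh_nodes_def by auto

lemma finite_simplex: "T \<in> M \<Longrightarrow> finite T"
  using conforming unfolding conforming_mesh_def simplex_vertices_def by auto

lemma P1_eval_eq_nodal_combination: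
  "\<exists>w. (\<forall>n. 0 \<le> w n) \<and>
     ((sum w N = 1 \<and> y = (\<Sum>n\<in>N. w n *\<^sub>R n)) \<or> (\<forall>n. w n = 0)) \<and>
     (\<forall>u\<in>P1 M. u y = (\<Sum>n\<in>N. w n * u n))"
proof (cases "y \<in> mesh_union M")
  case False
  then show ?thesis by (intro exI[of _ "\<lambda>_. 0"]) (auto simp: P1_def)
next
  case True
  then obtain T where T: "T \<in> M" "y \<in> convex hull T" unfolding mesh_union_def by auto
  obtain \<mu> where \<mu>: "\<forall>x\<in>T. 0 \<le> \<mu> x" "sum \<mu> T = 1" "(\<Sum>x\<in>T. \<mu> x *\<^sub>R x) = y"
    using T(2) convex_hull_finite[OF finite_simplex[OF T(1)]] by auto
  define w where "w n = (if n \<in> T then \<mu> n else 0)" for n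
  have TN: "T \<subseteq> N" using T unfolding mesh_nodes_def by auto
  have extend: "(\<Sum>n\<in>N. w n * h n) = (\<Sum>n\<in>T. \<mu> n * h n)" for h :: "'a \<Rightarrow> real"
    using sum.mono_neutral_cong_right[OF finite_nodes TN, of "\<lambda>n. w n * h n" "\<lambda>n. \<mu> n * h n"]
    unfolding w_def by simp
  have "(\<Sum>n\<in>N. w n *\<^sub>R n) = y"
    using sum.mono_neutral_cong_right[OF finite_nodes TN, of "\<lambda>n. w n *\<^sub>R n" "\<lambda>n. \<mu> n *\<^sub>R n"] \<mu>(3)
    unfolding w_def by simp
  moreover have "u y = (\<Sum>n\<in>N. w n * u n)" if u: "u \<in> P1 M" for u
  proof -
    obtain c b where cb: "\<forall>x\<in>convex hull T. u x = c \<bullet> x + b"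
      using u T(1) unfolding P1_def by blast
    have "u y = c \<bullet> y + b" using cb T(2) by auto
    also have "\<dots> = (\<Sum>x\<in>T. \<mu> x * (c \<bullet> x + b))" using affine_combination_inner[OF \<mu>(2)] \<mu>(3) by metis
    also have "\<dots> = (\<Sum>x\<in>T. \<mu> x * u x)"
      using cb hull_subset[of T convex] by (intro sum.cong) auto
    finally show ?thesis using extend by simp
  qed
  moreover have "sum w N = 1" using extend[of "\<lambda>_. 1"] \<mu>(2) by simp
  moreover have "\<forall>n. 0 \<le> w n" using \<mu>(1) unfolding w_def by simp
  ultimately show ?thesis by blast
qed

lemma continuous_on_mesh_union:
  assumes "\<forall>T\<in>M. \<exists>c b. \<forall>x\<in>convex hull T. u x = c \<bullet> x + b"
  shows "continuous_on (mesh_union M) u"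
  unfolding mesh_union_def
proof (rule continuous_on_closed_Union)
  show "finite M" using conforming unfolding conforming_mesh_def by auto
  fix T assume T: "T \<in> M"
  show "closed (convex hull T)"
    using finite_simplex[OF T] by (simp add: compact_imp_closed finite_imp_compact_convex_hull)
  obtain c b where cb: "\<forall>x\<in>convex hull T. u x = c \<bullet> x + b" using assms T by blast
  have "continuous_on (convex hull T) (\<lambda>x. c \<bullet> x + b)" by (intro continuous_intros)
  then show "continuous_on (convex hull T) u" by (rule continuous_on_eq) (use cb in simp)
qed

lemma P1_interpolant_exists: "\<exists>u\<in>P1 M. \<forall>n\<in>N. u n = a n"
proof -
  have "\<forall>T\<in>M. \<exists>c b. \<forall>t\<in>T. c \<bullet> t + b = a t"
    using affine_interpolation conforming unfolding conforming_mesh_def simplex_vertices_def by blast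
  then obtain c b where cb: "\<forall>T\<in>M. \<forall>t\<in>T. c T \<bullet> t + b T = a t" by metis
  \<comment> \<open>the affine pieces agree on common faces, since both interpolate a at the vertices of the face\<close>
  have agree: "c T1 \<bullet> y + b T1 = c T2 \<bullet> y + b T2"
    if T12: "T1 \<in> M" "T2 \<in> M" "y \<in> convex hull T1" "y \<in> convex hull T2" for T1 T2 y
  proof (rule affine_eq_on_convex_hull)
    show "finite (T1 \<inter> T2)" using finite_simplex[OF T12(1)] by simp
    show "y \<in> convex hull (T1 \<inter> T2)" using conforming T12 unfolding conforming_mesh_def by blast
    show "\<forall>t\<in>T1 \<inter> T2. c T1 \<bullet> t + b T1 = c T2 \<bullet> t + b T2" using cb T12(1,2) by simp
  qed
  define u where "u y = (if y \<in> mesh_union M then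
      (let T = (SOME T. T \<in> M \<and> y \<in> convex hull T) in c T \<bullet> y + b T) else 0)" for y
  have u_on: "u y = c T \<bullet> y + b T" if T: "T \<in> M" "y \<in> convex hull T" for T y
  proof -
    define T' where "T' = (SOME T. T \<in> M \<and> y \<in> convex hull T)"
    have T': "T' \<in> M \<and> y \<in> convex hull T'"
      unfolding T'_def by (rule someI[of _ T]) (use T in auto)
    have "y \<in> mesh_union M" using T unfolding mesh_union_def by auto
    then have "u y = c T' \<bullet> y + b T'" unfolding u_def T'_def by (simp add: Let_def)
    also have "\<dots> = c T \<bullet> y + b T" using agree[of T' T y] T' T by blast
    finally show ?thesis .
  qed
  then have "\<forall>T\<in>M. \<exists>c b. \<forall>x\<in>convex hull T. u x = c \<bullet> x + b" by blast
  moreover have "\<forall>x. x \<notin> mesh_union M \<longrightarrow> u x = 0" unfolding u_def by simp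
  ultimately have "u \<in> P1 M" unfolding P1_def using continuous_on_mesh_union by blast
  moreover have "u n = a n" if "n \<in> N" for n
  proof -
    obtain T where T: "T \<in> M" "n \<in> T" using \<open>n \<in> N\<close> unfolding mesh_nodes_def by auto
    then show ?thesis using u_on cb hull_subset[of T convex] by auto
  qed
  ultimately show ?thesis by blast
qed

text \<open>weight y consists of the barycentric coordinates of y in a simplex of the mesh containing y,
  extended by zero to the other nodes; it vanishes if y lies outside the mesh.\<close>

definition weight :: "'a \<Rightarrow> 'a \<Rightarrow> real" where
  "weight y = (SOME w. (\<forall>n. 0 \<le> w n) \<and>
     ((sum w N = 1 \<and> y = (\<Sum>n\<in>N. w n *\<^sub>R n)) \<or> (\<forall>n. w n = 0)) \<and>
     (\<forall>u\<in>P1 M. u y = (\<Sum>n\<in>N. w n * u n)))"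

definition interp :: "('a \<Rightarrow> real) \<Rightarrow> 'a \<Rightarrow> real" where
  "interp a y = (\<Sum>n\<in>N. weight y n * a n)"

lemma weight_spec:
  "(\<forall>n. 0 \<le> weight y n) \<and>
   ((sum (weight y) N = 1 \<and> y = (\<Sum>n\<in>N. weight y n *\<^sub>R n)) \<or> (\<forall>n. weight y n = 0)) \<and>
   (\<forall>u\<in>P1 M. u y = (\<Sum>n\<in>N. weight y n * u n))"
  unfolding weight_def using P1_eval_eq_nodal_combination[of y] by (rule someI_ex)

lemma weight_nonneg: "0 \<le> weight y n"
  using weight_spec by blast

lemma weight_barycentric_or_zero:
  "(sum (weight y) N = 1 \<and> y = (\<Sum>n\<in>N. weight y n *\<^sub>R n)) \<or> (\<forall>n. weight y n = 0)"
  using weight_spec by blast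

lemma sum_weight_le_1: "sum (weight y) N \<le> 1"
  using weight_barycentric_or_zero[of y] by auto

lemma interp_P1:
  assumes "u \<in> P1 M"
  shows "interp u = u"
proof
  fix y
  show "interp u y = u y" using weight_spec[of y] assms unfolding interp_def by auto
qed

lemma interp_cong: "\<forall>n\<in>N. a n = b n \<Longrightarrow> interp a = interp b"
  unfolding interp_def by (intro ext sum.cong) auto

lemma interp_in_P1: "interp a \<in> P1 M"
  and interp_node: "n \<in> N \<Longrightarrow> interp a n = a n"
proof -
  obtain u where u: "u \<in> P1 M" "\<forall>n\<in>N. u n = a n" using P1_interpolant_exists by blast
  then have "interp a = u" using interp_cong[of a u] interp_P1[OF u(1)] by auto
  then show "interp a \<in> P1 M" "n \<in> N \<Longrightarrow> interp a n = a n" using u by auto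
qed

lemma P1_eqI: "u \<in> P1 M \<Longrightarrow> v \<in> P1 M \<Longrightarrow> \<forall>n\<in>N. u n = v n \<Longrightarrow> u = v"
  using interp_cong[of u v] interp_P1[of u] interp_P1[of v] by simp

lemma hat_eq_weight:
  assumes "z \<in> N"
  shows "hat M z y = weight y z"
proof -
  define \<delta> where "\<delta> n = (if n = z then 1 else 0 :: real)" for n
  have "hat M z = interp \<delta>"
    unfolding hat_def \<delta>_def[symmetric]
  proof (rule the_equality)
    show "interp \<delta> \<in> P1 M \<and> (\<forall>y\<in>N. interp \<delta> y = \<delta> y)"
      using interp_in_P1 interp_node by blast
    show "w = interp \<delta>" if "w \<in> P1 M \<and> (\<forall>y\<in>N. w y = \<delta> y)" for w
      using that interp_in_P1 interp_node by (intro P1_eqI) auto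
  qed
  then show ?thesis
    using finite_nodes assms by (simp add: interp_def \<delta>_def if_distrib cong: if_cong)
qed

lemma interp_le_shift:
  assumes "0 \<le> c" "\<forall>n\<in>N. a n \<le> b n + c"
  shows "interp a y \<le> interp b y + c"
proof -
  have "interp a y \<le> (\<Sum>n\<in>N. weight y n * (b n + c))"
    unfolding interp_def using assms weight_nonneg by (intro sum_mono mult_left_mono) auto
  also have "\<dots> = interp b y + c * sum (weight y) N"
    unfolding interp_def by (simp add: algebra_simps sum.distrib sum_distrib_left)
  also have "\<dots> \<le> interp b y + c"
    using sum_weight_le_1 assms(1) by (simp add: mult_left_le)
  finally show ?thesis .
qed

lemma interp_dist_le:
  assumes "0 \<le> c" "\<forall>n\<in>N. \<bar>a n - b n\<bar> \<le> c"
  shows "\<bar>interp a y - interp b y\<bar> \<le> c"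
proof -
  have "\<forall>n\<in>N. a n \<le> b n + c" "\<forall>n\<in>N. b n \<le> a n + c" using assms(2) by (auto simp: abs_le_iff)
  from interp_le_shift[OF assms(1) this(1), of y] interp_le_shift[OF assms(1) this(2), of y]
  show ?thesis by (simp add: abs_le_iff)
qed

lemma interp_scale: "interp (\<lambda>n. t * a n) y = t * interp a y"
  unfolding interp_def by (simp add: sum_distrib_left algebra_simps)

lemma interp_uminus: "interp (\<lambda>n. - a n) y = - interp a y"
  using interp_scale[of "-1"] by simp

lemma interp_diff: "interp (\<lambda>n. a n - b n) y = interp a y - interp b y"
  unfolding interp_def by (simp add: right_diff_distrib sum_subtractf)

lemma interp_uniform_limit:
  assumes "\<And>k. u k \<in> P1 M" "w \<in> P1 M" "\<forall>n\<in>N. (\<lambda>k. u k n) \<longlonglongrightarrow> w n"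
  shows "uniform_limit UNIV u w sequentially"
  unfolding uniform_limit_iff
proof (intro allI impI)
  fix e :: real assume "0 < e"
  then have "\<forall>n\<in>N. \<forall>\<^sub>F k in sequentially. dist (u k n) (w n) < e / 2"
    using assms(3) unfolding tendsto_iff by (meson half_gt_zero)
  then have "\<forall>\<^sub>F k in sequentially. \<forall>n\<in>N. dist (u k n) (w n) < e / 2"
    by (rule eventually_ball_finite[OF finite_nodes])
  then show "\<forall>\<^sub>F k in sequentially. \<forall>x\<in>UNIV. dist (u k x) (w x) < e"
  proof (rule eventually_mono)
    fix k assume "\<forall>n\<in>N. dist (u k n) (w n) < e / 2"
    then have "\<bar>interp (u k) x - interp w x\<bar> \<le> e / 2" for x
      using \<open>0 < e\<close> by (intro interp_dist_le) (auto simp: dist_real_def)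
    then have "dist (u k x) (w x) \<le> e / 2" for x
      by (simp add: dist_real_def interp_P1[OF assms(1)] interp_P1[OF assms(2)])
    moreover have "e / 2 < e" using \<open>0 < e\<close> by simp
    ultimately show "\<forall>x\<in>UNIV. dist (u k x) (w x) < e" by (meson order_le_less_trans)
  qed
qed

lemma quadratic_le_interp:
  assumes "0 \<le> K" "K * (norm y)\<^sup>2 - L \<le> 0"
  shows "K * (norm y)\<^sup>2 - L \<le> interp (\<lambda>x. K * (norm x)\<^sup>2 - L) y"
  using weight_barycentric_or_zero[of y]
proof
  assume "sum (weight y) N = 1 \<and> y = (\<Sum>n\<in>N. weight y n *\<^sub>R n)"
  then have sum1: "sum (weight y) N = 1" and y: "y = (\<Sum>n\<in>N. weight y n *\<^sub>R n)" by auto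
  have "(norm y)\<^sup>2 \<le> (\<Sum>n\<in>N. weight y n * (norm n)\<^sup>2)"
    using norm_sq_le_weighted_sum[OF finite_nodes _ sum1 y] weight_nonneg by blast
  then have "K * (norm y)\<^sup>2 \<le> K * (\<Sum>n\<in>N. weight y n * (norm n)\<^sup>2)"
    using assms(1) by (rule mult_left_mono)
  moreover have "interp (\<lambda>x. K * (norm x)\<^sup>2 - L) y
      = K * (\<Sum>n\<in>N. weight y n * (norm n)\<^sup>2) - L * sum (weight y) N"
    unfolding interp_def by (simp add: sum_subtractf sum_distrib_left algebra_simps)
  ultimately show ?thesis using sum1 by simp
qed (use assms in \<open>simp add: interp_def\<close>)

lemma interp_le_bound_on_support:
  assumes sum1: "sum (weight y) N = 1" and bound: "\<forall>n\<in>N. 0 < weight y n \<longrightarrow> a n \<le> c"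
  shows "interp a y \<le> c"
    and "interp a y = c \<Longrightarrow> \<forall>n\<in>N. 0 < weight y n \<longrightarrow> a n = c"
proof -
  have terms_nonneg: "\<forall>n\<in>N. 0 \<le> weight y n * (c - a n)"
    using bound weight_nonneg by (metis diff_ge_0_iff_ge less_eq_real_def mult_eq_0_iff mult_nonneg_nonneg)
  have "(\<Sum>n\<in>N. weight y n * (c - a n)) = c * sum (weight y) N - interp a y"
    unfolding interp_def by (simp add: algebra_simps sum_subtractf sum_distrib_left)
  then have gap: "(\<Sum>n\<in>N. weight y n * (c - a n)) = c - interp a y" using sum1 by simp
  show "interp a y \<le> c" using gap terms_nonneg sum_nonneg[of N] by fastforce
  assume "interp a y = c"
  then have "\<forall>n\<in>N. weight y n * (c - a n) = 0"
    using gap terms_nonneg sum_nonneg_eq_0_iff[OF finite_nodes, of "\<lambda>n. weight y n * (c - a n)"]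
    by simp
  then show "\<forall>n\<in>N. 0 < weight y n \<longrightarrow> a n = c" by auto
qed

lemma interp_ge_max_support:
  assumes "\<forall>n\<in>N. d n \<le> m" "0 < m" "m \<le> interp d y"
  shows "sum (weight y) N = 1" and "\<forall>n\<in>N. 0 < weight y n \<longrightarrow> d n = m"
proof -
  have "interp d y \<le> (\<Sum>n\<in>N. weight y n * m)"
    unfolding interp_def using assms(1) weight_nonneg by (intro sum_mono mult_left_mono) auto
  also have "\<dots> = m * sum (weight y) N" by (simp add: sum_distrib_left mult.commute)
  finally have "m * 1 \<le> m * sum (weight y) N" using assms(3) by simp
  then show sum1: "sum (weight y) N = 1"
    using sum_weight_le_1[of y] assms(2) by (simp add: mult_le_cancel_left_pos)
  have "interp d y = m" using interp_le_bound_on_support(1)[OF sum1, of d m] assms(1,3) by auto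
  then show "\<forall>n\<in>N. 0 < weight y n \<longrightarrow> d n = m"
    using interp_le_bound_on_support(2)[OF sum1, of d m] assms(1) by auto
qed

end

section \<open>Iteration of monotone nonexpansive maps\<close>

locale monotone_nonexpansive =
  fixes N :: "'n set" and \<Phi> :: "('n \<Rightarrow> real) \<Rightarrow> 'n \<Rightarrow> real"
  assumes finite: "finite N"
    and le_shift: "0 \<le> c \<Longrightarrow> \<forall>n\<in>N. a n \<le> b n + c \<Longrightarrow> \<forall>n\<in>N. \<Phi> a n \<le> \<Phi> b n + c"
begin

abbreviation fixed :: "('n \<Rightarrow> real) \<Rightarrow> bool" where
  "fixed a \<equiv> \<forall>n\<in>N. \<Phi> a n = a n"

lemma mono: "\<forall>n\<in>N. a n \<le> b n \<Longrightarrow> \<forall>n\<in>N. \<Phi> a n \<le> \<Phi> b n"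
  using le_shift[of 0 a b] by simp

lemma funpow_mono: "\<forall>n\<in>N. a n \<le> b n \<Longrightarrow> \<forall>n\<in>N. (\<Phi> ^^ k) a n \<le> (\<Phi> ^^ k) b n"
  by (induction k) (simp_all add: mono)

lemma nonexpansive:
  assumes "0 \<le> c" "\<forall>n\<in>N. \<bar>a n - b n\<bar> \<le> c"
  shows "\<forall>n\<in>N. \<bar>\<Phi> a n - \<Phi> b n\<bar> \<le> c"
proof -
  have "\<forall>n\<in>N. a n \<le> b n + c" "\<forall>n\<in>N. b n \<le> a n + c"
    using assms(2) by (auto simp: abs_le_iff)
  from le_shift[OF assms(1) this(1)] le_shift[OF assms(1) this(2)] show ?thesis
    by (auto simp: abs_le_iff)
qed

lemma limit_fixed:
  assumes lim: "\<forall>n\<in>N. (\<lambda>k. l k n) \<longlonglongrightarrow> a n"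
    and step: "\<And>k. \<forall>n\<in>N. l (Suc k) n = \<Phi> (l k) n"
  shows "fixed a"
proof
  fix n assume n: "n \<in> N"
  have "(\<lambda>k. \<Phi> (l k) n) \<longlonglongrightarrow> \<Phi> a n"
    unfolding tendsto_iff
  proof (intro allI impI)
    fix e :: real assume "0 < e"
    then have "\<forall>m\<in>N. \<forall>\<^sub>F k in sequentially. dist (l k m) (a m) < e / 2"
      using lim unfolding tendsto_iff by (meson half_gt_zero)
    then have "\<forall>\<^sub>F k in sequentially. \<forall>m\<in>N. dist (l k m) (a m) < e / 2"
      by (rule eventually_ball_finite[OF finite])
    then show "\<forall>\<^sub>F k in sequentially. dist (\<Phi> (l k) n) (\<Phi> a n) < e"
    proof (rule eventually_mono)
      fix k assume "\<forall>m\<in>N. dist (l k m) (a m) < e / 2"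
      then have "\<forall>m\<in>N. \<bar>\<Phi> (l k) m - \<Phi> a m\<bar> \<le> e / 2"
        using \<open>0 < e\<close> by (intro nonexpansive) (auto simp: dist_real_def less_imp_le)
      then show "dist (\<Phi> (l k) n) (\<Phi> a n) < e" using n \<open>0 < e\<close> by (force simp: dist_real_def)
    qed
  qed
  moreover have "(\<lambda>k. \<Phi> (l k) n) \<longlonglongrightarrow> a n"
    using LIMSEQ_Suc[of "\<lambda>k. l k n"] lim step n by simp
  ultimately show "\<Phi> a n = a n" using LIMSEQ_unique by blast
qed

lemma convergent_iterates_fixed:
  assumes "\<forall>n\<in>N. convergent (\<lambda>k. (\<Phi> ^^ k) x n)"
  shows "\<exists>a. fixed a \<and> (\<forall>n\<in>N. (\<lambda>k. (\<Phi> ^^ k) x n) \<longlonglongrightarrow> a n)"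
proof -
  define a where "a n = lim (\<lambda>k. (\<Phi> ^^ k) x n)" for n
  have "\<forall>n\<in>N. (\<lambda>k. (\<Phi> ^^ k) x n) \<longlonglongrightarrow> a n"
    using assms by (simp add: a_def convergent_LIMSEQ_iff)
  moreover from this have "fixed a" by (rule limit_fixed) simp
  ultimately show ?thesis by blast
qed

lemma sub_super_iterates_converge:
  assumes sub: "\<forall>n\<in>N. s n \<le> \<Phi> s n" and super: "\<forall>n\<in>N. \<Phi> t n \<le> t n"
    and le: "\<forall>n\<in>N. s n \<le> t n"
  shows "\<exists>a. fixed a \<and> (\<forall>n\<in>N. (\<lambda>k. (\<Phi> ^^ k) s n) \<longlonglongrightarrow> a n)"
    and "\<exists>b. fixed b \<and> (\<forall>n\<in>N. (\<lambda>k. (\<Phi> ^^ k) t n) \<longlonglongrightarrow> b n)"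
proof -
  have inc: "incseq (\<lambda>k. (\<Phi> ^^ k) s n)" if "n \<in> N" for n
  proof (rule incseq_SucI)
    show "(\<Phi> ^^ k) s n \<le> (\<Phi> ^^ Suc k) s n" for k
      using funpow_mono[OF sub, of k] that by (simp add: funpow_swap1)
  qed
  have dec: "decseq (\<lambda>k. (\<Phi> ^^ k) t n)" if "n \<in> N" for n
  proof (rule decseq_SucI)
    show "(\<Phi> ^^ Suc k) t n \<le> (\<Phi> ^^ k) t n" for k
      using funpow_mono[OF super, of k] that by (simp add: funpow_swap1)
  qed
  have between: "(\<Phi> ^^ k) s n \<le> (\<Phi> ^^ k) t n" if "n \<in> N" for k n
    using funpow_mono[OF le] that by blast
  have "convergent (\<lambda>k. (\<Phi> ^^ k) s n)" if n: "n \<in> N" for n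
  proof -
    have "(\<Phi> ^^ k) s n \<le> t n" for k
      using between[OF n, of k] decseqD[OF dec[OF n], of 0 k] by simp
    then show ?thesis using incseq_convergent[OF inc[OF n]] by (metis convergentI)
  qed
  then show "\<exists>a. fixed a \<and> (\<forall>n\<in>N. (\<lambda>k. (\<Phi> ^^ k) s n) \<longlonglongrightarrow> a n)"
    by (intro convergent_iterates_fixed) blast
  have "convergent (\<lambda>k. (\<Phi> ^^ k) t n)" if n: "n \<in> N" for n
  proof -
    have "s n \<le> (\<Phi> ^^ k) t n" for k
      using between[OF n, of k] incseqD[OF inc[OF n], of 0 k] by simp
    then show ?thesis using decseq_convergent[OF dec[OF n]] by (metis convergentI)
  qed
  then show "\<exists>b. fixed b \<and> (\<forall>n\<in>N. (\<lambda>k. (\<Phi> ^^ k) t n) \<longlonglongrightarrow> b n)"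
    by (intro convergent_iterates_fixed) blast
qed

theorem iterates_converge_to_fixed_point:
  assumes sub: "\<forall>n\<in>N. s n \<le> \<Phi> s n" and super: "\<forall>n\<in>N. \<Phi> t n \<le> t n"
    and bracket0: "\<forall>n\<in>N. s n \<le> u 0 n \<and> u 0 n \<le> t n"
    and step: "\<And>k. \<forall>n\<in>N. u (Suc k) n = \<Phi> (u k) n"
    and unique: "\<And>a b. fixed a \<Longrightarrow> fixed b \<Longrightarrow> \<forall>n\<in>N. a n \<le> b n"
  shows "\<exists>a. fixed a \<and> (\<forall>n\<in>N. (\<lambda>k. u k n) \<longlonglongrightarrow> a n)"
proof -
  have "\<forall>n\<in>N. s n \<le> t n" using bracket0 by force
  obtain a where a: "fixed a" "\<forall>n\<in>N. (\<lambda>k. (\<Phi> ^^ k) s n) \<longlonglongrightarrow> a n"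
    using sub_super_iterates_converge(1)[OF sub super \<open>\<forall>n\<in>N. s n \<le> t n\<close>] by blast
  obtain b where b: "fixed b" "\<forall>n\<in>N. (\<lambda>k. (\<Phi> ^^ k) t n) \<longlonglongrightarrow> b n"
    using sub_super_iterates_converge(2)[OF sub super \<open>\<forall>n\<in>N. s n \<le> t n\<close>] by blast
  have "\<forall>n\<in>N. b n = a n"
    using unique[OF a(1) b(1)] unique[OF b(1) a(1)] by (auto intro: order_antisym)
  have bracket: "\<forall>n\<in>N. (\<Phi> ^^ k) s n \<le> u k n \<and> u k n \<le> (\<Phi> ^^ k) t n" for k
  proof (induction k)
    case 0
    then show ?case using bracket0 by simp
  next
    case (Suc k)
    then have "\<forall>n\<in>N. (\<Phi> ^^ k) s n \<le> u k n" "\<forall>n\<in>N. u k n \<le> (\<Phi> ^^ k) t n" by auto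
    from mono[OF this(1)] mono[OF this(2)] step[of k] show ?case by simp
  qed
  have "(\<lambda>k. u k n) \<longlonglongrightarrow> a n" if n: "n \<in> N" for n
  proof (rule tendsto_sandwich)
    show "\<forall>\<^sub>F k in sequentially. (\<Phi> ^^ k) s n \<le> u k n"
      and "\<forall>\<^sub>F k in sequentially. u k n \<le> (\<Phi> ^^ k) t n" using bracket n by simp_all
    show "(\<lambda>k. (\<Phi> ^^ k) s n) \<longlonglongrightarrow> a n" using a(2) n by blast
    show "(\<lambda>k. (\<Phi> ^^ k) t n) \<longlonglongrightarrow> a n" using b(2) n \<open>\<forall>n\<in>N. b n = a n\<close> by force
  qed
  then show ?thesis using a(1) by blast
qed

end

section \<open>The discrete scheme, its subsolutions and supersolutions\<close>

locale stencil_scheme = simplicial_mesh M for M :: "'a::euclidean_space set set" +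
  fixes \<Omega> :: "'a set" and \<epsilon> :: real and S :: "'a set"
  assumes eps_pos: "0 < \<epsilon>" and finite_S: "finite S" and S_unit: "S \<subseteq> sphere 0 1"
    and S_symmetric: "v \<in> S \<Longrightarrow> - v \<in> S" and S_nonempty: "S \<noteq> {}"
begin

abbreviation I :: "'a set" where "I \<equiv> interior_nodes \<Omega> M \<epsilon>"

lemma interior_nodes_subset: "I \<subseteq> N"
  by (simp add: interior_nodes_def)

lemma finite_stencil: "finite (stencil \<epsilon> S z)"
  using finite_S by (simp add: stencil_def)

lemma center_in_stencil: "z \<in> stencil \<epsilon> S z"
  by (simp add: stencil_def)

lemma stencil_point: "v \<in> S \<Longrightarrow> z + \<epsilon> *\<^sub>R v \<in> stencil \<epsilon> S z"
  unfolding stencil_def by blast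

lemma stencil_cases: "y \<in> stencil \<epsilon> S z \<Longrightarrow> y = z \<or> (\<exists>v\<in>S. y = z + \<epsilon> *\<^sub>R v)"
  by (auto simp: stencil_def)

definition upper :: "('a \<Rightarrow> real) \<Rightarrow> 'a \<Rightarrow> real" where
  "upper a z = Max (interp a ` stencil \<epsilon> S z)"

definition lower :: "('a \<Rightarrow> real) \<Rightarrow> 'a \<Rightarrow> real" where
  "lower a z = Min (interp a ` stencil \<epsilon> S z)"

lemma upper_ge: "y \<in> stencil \<epsilon> S z \<Longrightarrow> interp a y \<le> upper a z"
  unfolding upper_def using finite_stencil by auto

lemma lower_le: "y \<in> stencil \<epsilon> S z \<Longrightarrow> lower a z \<le> interp a y"
  unfolding lower_def using finite_stencil by auto

lemma upper_attained: "\<exists>y\<in>stencil \<epsilon> S z. upper a z = interp a y"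
  unfolding upper_def using Max_in[of "interp a ` stencil \<epsilon> S z"] finite_stencil center_in_stencil
  by fastforce

lemma lower_attained: "\<exists>y\<in>stencil \<epsilon> S z. lower a z = interp a y"
  unfolding lower_def using Min_in[of "interp a ` stencil \<epsilon> S z"] finite_stencil center_in_stencil
  by fastforce

lemma upper_le_shift:
  assumes "0 \<le> c" "\<forall>n\<in>N. a n \<le> b n + c"
  shows "upper a z \<le> upper b z + c"
proof -
  obtain y where "y \<in> stencil \<epsilon> S z" "upper a z = interp a y" using upper_attained by blast
  then show ?thesis using interp_le_shift[OF assms, of y] upper_ge[of y z b] by linarith
qed

lemma lower_le_shift:
  assumes "0 \<le> c" "\<forall>n\<in>N. a n \<le> b n + c"
  shows "lower a z \<le> lower b z + c"
proof -
  obtain y where "y \<in> stencil \<epsilon> S z" "lower b z = interp b y" using lower_attained by blast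
  then show ?thesis using interp_le_shift[OF assms, of y] lower_le[of y z a] by linarith
qed

lemma upper_scale:
  assumes "0 \<le> t"
  shows "upper (\<lambda>n. t * a n) z = t * upper a z"
proof -
  have "mono ((*) t)" using assms by (simp add: monoI mult_left_mono)
  then show ?thesis
    unfolding upper_def interp_scale image_image[symmetric, of "(*) t" "interp a"]
    using finite_stencil center_in_stencil by (intro mono_Max_commute[symmetric]) auto
qed

lemma lower_scale:
  assumes "0 \<le> t"
  shows "lower (\<lambda>n. t * a n) z = t * lower a z"
proof -
  have "mono ((*) t)" using assms by (simp add: monoI mult_left_mono)
  then show ?thesis
    unfolding lower_def interp_scale image_image[symmetric, of "(*) t" "interp a"]
    using finite_stencil center_in_stencil by (intro mono_Min_commute[symmetric]) auto
qed

lemma upper_uminus: "upper (\<lambda>n. - a n) z = - lower a z"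
  and lower_uminus: "lower (\<lambda>n. - a n) z = - upper a z"
proof -
  have ne: "finite (interp a ` stencil \<epsilon> S z)" "interp a ` stencil \<epsilon> S z \<noteq> {}"
    using finite_stencil center_in_stencil by auto
  show "upper (\<lambda>n. - a n) z = - lower a z" "lower (\<lambda>n. - a n) z = - upper a z"
    unfolding upper_def lower_def interp_uminus image_image[symmetric, of uminus "interp a"]
    using minus_Min_eq_Max[OF ne] minus_Max_eq_Min[OF ne] by simp_all
qed

lemma upper_P1: "u \<in> P1 M \<Longrightarrow> upper u z = Max (u ` stencil \<epsilon> S z)"
  and lower_P1: "u \<in> P1 M \<Longrightarrow> lower u z = Min (u ` stencil \<epsilon> S z)"
  by (simp_all add: upper_def lower_def interp_P1)

text \<open>lap a z is \<open>\<epsilon>\<^sup>2\<close> times the discrete infinity-Laplacian of the interpolant of a at z.\<close>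

definition lap :: "('a \<Rightarrow> real) \<Rightarrow> 'a \<Rightarrow> real" where
  "lap a z = 2 * a z - upper a z - lower a z"

definition sweep :: "('a \<Rightarrow> real) \<Rightarrow> ('a \<Rightarrow> real) \<Rightarrow> ('a \<Rightarrow> real) \<Rightarrow> 'a \<Rightarrow> real" where
  "sweep f g a z = (if z \<in> I then (\<epsilon>\<^sup>2 * f z + upper a z + lower a z) / 2 else g z)"

definition solves :: "('a \<Rightarrow> real) \<Rightarrow> ('a \<Rightarrow> real) \<Rightarrow> ('a \<Rightarrow> real) \<Rightarrow> bool" where
  "solves f g a \<longleftrightarrow> (\<forall>z\<in>I. lap a z = \<epsilon>\<^sup>2 * f z) \<and> (\<forall>z\<in>N - I. a z = g z)"

lemma solves_iff_fixed: "solves f g a \<longleftrightarrow> (\<forall>n\<in>N. sweep f g a n = a n)"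
  using interior_nodes_subset
  by (auto simp: solves_def sweep_def lap_def field_simps split: if_splits)

lemma discrete_solution_iff: "discrete_solution \<Omega> M \<epsilon> S f g w \<longleftrightarrow> w \<in> P1 M \<and> solves f g w"
proof (cases "w \<in> P1 M")
  case True
  then have lap: "disc_inf_lap \<epsilon> S w z = lap w z / \<epsilon>\<^sup>2" for z
    by (simp add: disc_inf_lap_def lap_def upper_P1 lower_P1)
  have "disc_inf_lap \<epsilon> S w z = f z \<longleftrightarrow> lap w z = \<epsilon>\<^sup>2 * f z" for z
    unfolding lap using eps_pos by (auto simp: field_simps)
  then show ?thesis
    using True by (simp add: discrete_solution_def solves_def boundary_nodes_def)
qed (simp add: discrete_solution_def)

lemma sweep_monotone_nonexpansive: "monotone_nonexpansive N (sweep f g)"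
proof
  show "finite N" by (rule finite_nodes)
  show "\<forall>n\<in>N. sweep f g a n \<le> sweep f g b n + c"
    if "0 \<le> c" "\<forall>n\<in>N. a n \<le> b n + c" for c a b
  proof
    fix n
    have "upper a n + lower a n \<le> upper b n + lower b n + 2 * c"
      using upper_le_shift[OF that, of n] lower_le_shift[OF that, of n] by linarith
    then show "sweep f g a n \<le> sweep f g b n + c" using that(1) by (auto simp: sweep_def field_simps)
  qed
qed

lemma sweep_uminus:
  "sweep f g (\<lambda>n. - a n) z = - sweep (\<lambda>n. - f n) (\<lambda>n. - g n) a z"
  by (simp add: sweep_def upper_uminus lower_uminus field_simps)

lemma lap_uminus: "lap (\<lambda>n. - a n) z = - lap a z"
  by (simp add: lap_def upper_uminus lower_uminus)

lemma solves_uminus: "solves f g a \<Longrightarrow> solves (\<lambda>n. - f n) (\<lambda>n. - g n) (\<lambda>n. - a n)"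
  by (simp add: solves_def lap_uminus)

lemma exists_direction_nonneg_inner: "\<exists>v\<in>S. 0 \<le> v \<bullet> z"
proof -
  obtain v where v: "v \<in> S" using S_nonempty by blast
  show ?thesis
  proof (cases "0 \<le> v \<bullet> z")
    case False
    then show ?thesis using S_symmetric[OF v] by (intro bexI[of _ "- v"]) auto
  qed (use v in blast)
qed

lemma quadratic_upper_plus_lower_ge:
  fixes K L :: real
  defines "q \<equiv> \<lambda>y. K * (norm y)\<^sup>2 - L"
  assumes "0 \<le> K" and below: "\<forall>y\<in>stencil \<epsilon> S z. q y \<le> interp a y"
    and center: "interp a z = q z"
  shows "2 * q z + K * \<epsilon>\<^sup>2 \<le> upper a z + lower a z"
proof -
  have q_shift: "q (z + \<epsilon> *\<^sub>R v) = q z + 2 * K * \<epsilon> * (v \<bullet> z) + K * \<epsilon>\<^sup>2" if "v \<in> S" for v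
    using norm_add_scaleR_unit_sq[of v z \<epsilon>] S_unit that by (auto simp: q_def algebra_simps)
  have upper_ge_q: "q (z + \<epsilon> *\<^sub>R v) \<le> upper a z" if "v \<in> S" for v
    using below upper_ge stencil_point[OF that] by (meson order_trans)
  obtain y where y: "y \<in> stencil \<epsilon> S z" "lower a z = interp a y" using lower_attained by blast
  from stencil_cases[OF y(1)] show ?thesis
  proof
    assume "y = z"
    obtain v where v: "v \<in> S" "0 \<le> v \<bullet> z" using exists_direction_nonneg_inner by blast
    have "0 \<le> 2 * K * \<epsilon> * (v \<bullet> z)" using assms(2) eps_pos v(2) by simp
    moreover have "lower a z = q z" using y center \<open>y = z\<close> by simp
    ultimately show ?thesis using upper_ge_q[OF v(1)] q_shift[OF v(1)] by linarith
  next
    assume "\<exists>v\<in>S. y = z + \<epsilon> *\<^sub>R v"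
    then obtain v where v: "v \<in> S" "y = z + \<epsilon> *\<^sub>R v" by blast
    have "q y \<le> lower a z" using below y by simp
    moreover have "q (z + \<epsilon> *\<^sub>R - v) \<le> upper a z" using upper_ge_q S_symmetric[OF v(1)] by blast
    moreover have "0 \<le> K * \<epsilon>\<^sup>2" using assms(2) by simp
    ultimately show ?thesis using q_shift[OF v(1)] q_shift[OF S_symmetric[OF v(1)]] v(2) by simp
  qed
qed

lemma quadratic_subsolution_at:
  fixes K L :: real
  defines "s \<equiv> \<lambda>x. K * (norm x)\<^sup>2 - L"
  assumes n: "n \<in> I" and K: "\<bar>f n\<bar> \<le> K" and nonpos: "\<forall>y\<in>stencil \<epsilon> S n. s y \<le> 0"
  shows "s n \<le> sweep f g s n"
proof -
  have "0 \<le> K" using K by linarith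
  have "\<forall>y\<in>stencil \<epsilon> S n. s y \<le> interp s y"
    using nonpos quadratic_le_interp[OF \<open>0 \<le> K\<close>] unfolding s_def by blast
  moreover have "interp s n = s n" using interp_node n interior_nodes_subset by blast
  ultimately have "2 * s n + K * \<epsilon>\<^sup>2 \<le> upper s n + lower s n"
    using quadratic_upper_plus_lower_ge[where K=K and L=L and z=n and a=s] \<open>0 \<le> K\<close>
    unfolding s_def by blast
  moreover have "0 \<le> \<epsilon>\<^sup>2 * (f n + K)" using K by simp
  ultimately show ?thesis using n by (simp add: sweep_def algebra_simps)
qed

lemma exists_subsolution_below: "\<exists>s. (\<forall>n\<in>N. s n \<le> sweep f g s n) \<and> (\<forall>n\<in>N. s n \<le> b n)"
proof -
  define K where "K = (\<Sum>z\<in>I. \<bar>f z\<bar>)"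
  define R where "R = N \<union> (\<Union>z\<in>I. stencil \<epsilon> S z)"
  define B where "B = (\<Sum>n\<in>N. \<bar>g n\<bar> + \<bar>b n\<bar>)"
  define L where "L = K * (\<Sum>x\<in>R. (norm x)\<^sup>2) + B"
  define s where "s x = K * (norm x)\<^sup>2 - L" for x :: 'a
  have finite_I: "finite I" using finite_nodes interior_nodes_subset by (rule finite_subset[rotated])
  have "0 \<le> K" "0 \<le> B" unfolding K_def B_def by (simp_all add: sum_nonneg)
  have "finite R" unfolding R_def using finite_nodes finite_I finite_stencil by blast
  then have s_R: "s x \<le> - B" if "x \<in> R" for x
    unfolding s_def L_def using that \<open>0 \<le> K\<close> by (auto intro!: mult_left_mono member_le_sum)
  have s_N: "s n \<le> g n \<and> s n \<le> b n" if "n \<in> N" for n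
  proof -
    have "\<bar>g n\<bar> + \<bar>b n\<bar> \<le> B"
      unfolding B_def using finite_nodes that by (intro member_le_sum) auto
    then show ?thesis using s_R[of n] that by (auto simp: R_def)
  qed
  have "s n \<le> sweep f g s n" if "n \<in> N" for n
  proof (cases "n \<in> I")
    case True
    have "\<bar>f n\<bar> \<le> K" unfolding K_def using finite_I True by (intro member_le_sum) auto
    moreover have "\<forall>y\<in>stencil \<epsilon> S n. s y \<le> 0" using s_R True \<open>0 \<le> B\<close> by (force simp: R_def)
    ultimately show ?thesis using quadratic_subsolution_at[OF True] unfolding s_def[abs_def] by blast
  qed (use s_N that in \<open>simp add: sweep_def\<close>)
  then show ?thesis using s_N by blast
qed

lemma exists_supersolution_above: "\<exists>t. (\<forall>n\<in>N. sweep f g t n \<le> t n) \<and> (\<forall>n\<in>N. b n \<le> t n)"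
proof -
  obtain s where "\<forall>n\<in>N. s n \<le> sweep (\<lambda>n. - f n) (\<lambda>n. - g n) s n" "\<forall>n\<in>N. s n \<le> - b n"
    using exists_subsolution_below[of "\<lambda>n. - f n" "\<lambda>n. - g n" "\<lambda>n. - b n"] by blast
  then show ?thesis by (intro exI[of _ "\<lambda>n. - s n"]) (auto simp: sweep_uminus)
qed

theorem sweep_iterates_converge:
  assumes unique: "\<And>a b. solves f g a \<Longrightarrow> solves f g b \<Longrightarrow> \<forall>n\<in>N. a n \<le> b n"
    and step: "\<And>k. \<forall>n\<in>N. u (Suc k) n = sweep f g (u k) n"
  shows "\<exists>a. solves f g a \<and> (\<forall>n\<in>N. (\<lambda>k. u k n) \<longlonglongrightarrow> a n)"
proof -
  interpret monotone_nonexpansive N "sweep f g" by (rule sweep_monotone_nonexpansive)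
  obtain s where s: "\<forall>n\<in>N. s n \<le> sweep f g s n" "\<forall>n\<in>N. s n \<le> u 0 n"
    using exists_subsolution_below by blast
  obtain t where t: "\<forall>n\<in>N. sweep f g t n \<le> t n" "\<forall>n\<in>N. u 0 n \<le> t n"
    using exists_supersolution_above by blast
  have bracket0: "\<forall>n\<in>N. s n \<le> u 0 n \<and> u 0 n \<le> t n" using s(2) t(2) by blast
  have unique_fixed: "\<forall>n\<in>N. a n \<le> b n" if "fixed a" "fixed b" for a b
    using unique that unfolding solves_iff_fixed by blast
  show ?thesis
    using iterates_converge_to_fixed_point[OF s(1) t(1) bracket0 step unique_fixed]
    unfolding solves_iff_fixed .
qed

section \<open>Comparison and uniqueness\<close>

lemma max_difference_pos:
  fixes a b :: "'a \<Rightarrow> real"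
  assumes "\<not> (\<forall>n\<in>N. a n \<le> b n)"
  obtains m where "0 < m" "\<forall>n\<in>N. a n - b n \<le> m" "\<exists>z\<in>N. a z - b z = m"
proof -
  define m where "m = Max ((\<lambda>n. a n - b n) ` N)"
  have "\<forall>n\<in>N. a n - b n \<le> m" unfolding m_def using finite_nodes by auto
  moreover have "\<exists>z\<in>N. a z - b z = m"
    unfolding m_def using assms finite_nodes Max_in[of "(\<lambda>n. a n - b n) ` N"] by fastforce
  moreover have "0 < m" using assms calculation(1) by force
  ultimately show ?thesis using that by blast
qed

lemma comparison_strict:
  assumes "\<forall>z\<in>N - I. a z \<le> b z" "\<forall>z\<in>I. lap a z < lap b z"
  shows "\<forall>n\<in>N. a n \<le> b n"
proof (rule ccontr)
  assume "\<not> ?thesis"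
  then obtain m z where m: "0 < m" "\<forall>n\<in>N. a n - b n \<le> m" and z: "z \<in> N" "a z - b z = m"
    by (metis max_difference_pos)
  then have "z \<in> I" using assms(1) by force
  have "\<forall>n\<in>N. a n \<le> b n + m" using m(2) by force
  then have "upper a z \<le> upper b z + m" "lower a z \<le> lower b z + m"
    using m(1) by (simp_all add: upper_le_shift lower_le_shift)
  then have "lap b z \<le> lap a z" unfolding lap_def using z(2) by linarith
  then show False using assms(2) \<open>z \<in> I\<close> by force
qed

lemma lap_scale_sub_le:
  assumes "0 \<le> t" "0 \<le> c"
  shows "lap (\<lambda>n. t * a n - c) z \<le> t * lap a z"
proof -
  have "\<forall>n\<in>N. t * a n \<le> (t * a n - c) + c" by simp
  then have "upper (\<lambda>n. t * a n) z \<le> upper (\<lambda>n. t * a n - c) z + c"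
    and "lower (\<lambda>n. t * a n) z \<le> lower (\<lambda>n. t * a n - c) z + c"
    using assms(2) by (simp_all add: upper_le_shift lower_le_shift)
  then show ?thesis
    unfolding lap_def upper_scale[OF assms(1)] lower_scale[OF assms(1)] by (simp add: algebra_simps)
qed

lemma scaled_solution_le:
  assumes a: "solves f g a" and b: "solves f g b" and pos: "\<forall>z\<in>I. 0 < f z"
    and t: "0 < t" "t < 1" and G: "0 \<le> G" "\<forall>z\<in>N - I. \<bar>g z\<bar> \<le> G"
  shows "\<forall>n\<in>N. t * a n - (1 - t) * G \<le> b n"
proof (rule comparison_strict)
  show "\<forall>z\<in>N - I. t * a z - (1 - t) * G \<le> b z"
  proof
    fix z assume z: "z \<in> N - I"
    have "- G \<le> g z" using G(2) z by force
    then have "(1 - t) * - G \<le> (1 - t) * g z" using t by (intro mult_left_mono) auto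
    moreover have "a z = g z" "b z = g z" using a b z by (auto simp: solves_def)
    ultimately show "t * a z - (1 - t) * G \<le> b z" by (simp add: algebra_simps)
  qed
  show "\<forall>z\<in>I. lap (\<lambda>n. t * a n - (1 - t) * G) z < lap b z"
  proof
    fix z assume z: "z \<in> I"
    have "lap (\<lambda>n. t * a n - (1 - t) * G) z \<le> t * lap a z"
      using t G(1) by (intro lap_scale_sub_le) auto
    also have "\<dots> < 1 * (\<epsilon>\<^sup>2 * f z)"
      using a z pos t eps_pos by (simp add: solves_def mult_strict_right_mono)
    also have "\<dots> = lap b z" using b z by (simp add: solves_def)
    finally show "lap (\<lambda>n. t * a n - (1 - t) * G) z < lap b z" .
  qed
qed

lemma solutions_le_if_rhs_pos:
  assumes a: "solves f g a" and b: "solves f g b" and pos: "\<forall>z\<in>I. 0 < f z"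
  shows "\<forall>n\<in>N. a n \<le> b n"
proof
  fix n assume n: "n \<in> N"
  define G where "G = (\<Sum>n\<in>N. \<bar>g n\<bar>)"
  have "0 \<le> G" unfolding G_def by (simp add: sum_nonneg)
  moreover have "\<forall>z\<in>N - I. \<bar>g z\<bar> \<le> G"
    unfolding G_def using finite_nodes by (auto intro: member_le_sum)
  ultimately have scaled: "t * a n - (1 - t) * G \<le> b n" if "t \<in> {0<..<1}" for t
    using scaled_solution_le[OF a b pos] n that by auto
  have "((\<lambda>t. t * a n - (1 - t) * G) \<longlongrightarrow> 1 * a n - (1 - 1) * G) (at_left 1)"
    by (intro tendsto_intros)
  then have "((\<lambda>t. t * a n - (1 - t) * G) \<longlongrightarrow> a n) (at_left 1)" by simp
  moreover have "\<forall>\<^sub>F t in at_left (1::real). t \<in> {0<..<1}"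
    by (rule eventually_at_left_real) simp
  then have "\<forall>\<^sub>F t in at_left 1. t * a n - (1 - t) * G \<le> b n"
    by (rule eventually_mono) (rule scaled)
  ultimately show "a n \<le> b n"
    using tendsto_le[OF _ tendsto_const] trivial_limit_at_left_real by blast
qed

lemma cond_M1_weight:
  assumes "cond_M1 \<Omega> M \<epsilon> S" "F \<subseteq> I" "F \<noteq> {}"
  obtains z z' v where "z \<in> F" "z' \<in> N - F" "v \<in> S" "0 < weight (z + \<epsilon> *\<^sub>R v) z'"
proof -
  obtain z z' where z: "z \<in> F" "z' \<in> N - F" "z' \<in> ext_stencil M \<epsilon> S z"
    using assms unfolding cond_M1_def by blast
  then have "z' \<noteq> z" by blast
  then obtain v where "v \<in> S" "0 < hat M z' (z + \<epsilon> *\<^sub>R v)"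
    using z(3) unfolding ext_stencil_def by blast
  then show ?thesis using that z hat_eq_weight by auto
qed

lemma stencil_flat_at_max:
  assumes lap: "lap a z = 0" "lap b z = 0" and "z \<in> N" "0 < m"
    and diff_le: "\<forall>n\<in>N. a n - b n \<le> m" and diff_z: "a z - b z = m"
    and a_le: "\<forall>n\<in>N. a n - b n = m \<longrightarrow> a n \<le> a z"
  shows "\<forall>y\<in>stencil \<epsilon> S z. interp a y = a z \<and> interp b y = b z"
proof -
  have "\<forall>n\<in>N. a n \<le> b n + m" using diff_le by force
  then have "upper a z \<le> upper b z + m" "lower a z \<le> lower b z + m"
    using \<open>0 < m\<close> by (simp_all add: upper_le_shift lower_le_shift)
  then have upper_diff: "upper a z = upper b z + m" and lower_diff: "lower a z = lower b z + m"
    using lap diff_z unfolding lap_def by linarith+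
  obtain y where y: "y \<in> stencil \<epsilon> S z" "upper a z = interp a y" using upper_attained by blast
  have "m \<le> interp (\<lambda>n. a n - b n) y"
    using upper_ge[OF y(1), of b] upper_diff y(2) by (simp add: interp_diff)
  then have sum1: "sum (weight y) N = 1" and "\<forall>n\<in>N. 0 < weight y n \<longrightarrow> a n - b n = m"
    using interp_ge_max_support[OF diff_le \<open>0 < m\<close>] by auto
  then have "upper a z \<le> a z"
    using interp_le_bound_on_support(1)[OF sum1, of a "a z"] a_le y(2) by auto
  moreover have "a z \<le> upper a z" using upper_ge[OF center_in_stencil, of a z] interp_node[OF \<open>z \<in> N\<close>] by simp
  ultimately have "upper a z = a z" "lower a z = a z" "upper b z = b z" "lower b z = b z"
    using lap(1) upper_diff lower_diff diff_z unfolding lap_def by linarith+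
  then show ?thesis using upper_ge lower_le by (metis order_antisym)
qed

lemma solutions_differ_at_interior:
  "solves f g a \<Longrightarrow> solves f g b \<Longrightarrow> n \<in> N \<Longrightarrow> a n \<noteq> b n \<Longrightarrow> n \<in> I"
  unfolding solves_def by (metis DiffI)

text \<open>For f = 0 a strong maximum principle: among the nodes where a - b is maximal, those where
  a is maximal form a set which, by (M.1), is left by some stencil; there a and b are flat, so the
  interpolant sees a node outside that set with the same values.\<close>

lemma solutions_le_if_rhs_zero:
  assumes a: "solves f g a" and b: "solves f g b" and zero: "\<forall>z\<in>I. f z = 0"
    and M1: "cond_M1 \<Omega> M \<epsilon> S"
  shows "\<forall>n\<in>N. a n \<le> b n"
proof (rule ccontr)
  assume "\<not> ?thesis"
  then obtain m where m: "0 < m" "\<forall>n\<in>N. a n - b n \<le> m" "\<exists>z\<in>N. a z - b z = m"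
    by (rule max_difference_pos)
  define A where "A = {n\<in>N. a n - b n = m}"
  have "finite A" "A \<noteq> {}" unfolding A_def using finite_nodes m(3) by auto
  define U where "U = Max (a ` A)"
  define F where "F = {n\<in>A. a n = U}"
  have "U \<in> a ` A" unfolding U_def using \<open>finite A\<close> \<open>A \<noteq> {}\<close> by (intro Max_in) auto
  then have "F \<noteq> {}" unfolding F_def by auto
  moreover have "F \<subseteq> I"
    using solutions_differ_at_interior[OF a b] m(1) by (auto simp: F_def A_def)
  ultimately obtain z z' v where z: "z \<in> F" and z': "z' \<in> N - F" and v: "v \<in> S"
    and w: "0 < weight (z + \<epsilon> *\<^sub>R v) z'"
    using cond_M1_weight[OF M1] by blast
  have "z \<in> I" "a z = U" "a z - b z = m" using z \<open>F \<subseteq> I\<close> by (auto simp: F_def A_def)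
  have a_le_U: "\<forall>n\<in>N. a n - b n = m \<longrightarrow> a n \<le> U"
    unfolding U_def A_def using \<open>finite A\<close> by (auto simp: A_def)
  have "lap a z = 0" "lap b z = 0" using a b zero \<open>z \<in> I\<close> by (auto simp: solves_def)
  then have flat: "interp a y = U \<and> interp b y = b z" if "y \<in> stencil \<epsilon> S z" for y
    using stencil_flat_at_max[of a z b m] interior_nodes_subset \<open>z \<in> I\<close> m(1,2) \<open>a z - b z = m\<close>
      \<open>a z = U\<close> a_le_U that by auto
  define y where "y = z + \<epsilon> *\<^sub>R v"
  have "m \<le> interp (\<lambda>n. a n - b n) y"
    using flat[OF stencil_point[OF v]] \<open>a z = U\<close> \<open>a z - b z = m\<close> by (simp add: y_def interp_diff)
  then have sum1: "sum (weight y) N = 1" and support_A: "\<forall>n\<in>N. 0 < weight y n \<longrightarrow> a n - b n = m"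
    using interp_ge_max_support[OF m(2) m(1)] by auto
  then have "\<forall>n\<in>N. 0 < weight y n \<longrightarrow> a n = U"
    using interp_le_bound_on_support(2)[OF sum1, of a U] a_le_U flat[OF stencil_point[OF v]]
    by (simp add: y_def)
  then show False using z' w support_A by (auto simp: F_def A_def y_def)
qed

lemma solutions_le:
  assumes "solves f g a" "solves f g b"
    and "(\<forall>z\<in>I. 0 < f z) \<or> (\<forall>z\<in>I. f z < 0) \<or> ((\<forall>z\<in>I. f z = 0) \<and> cond_M1 \<Omega> M \<epsilon> S)"
  shows "\<forall>n\<in>N. a n \<le> b n"
  using assms(3)
proof (elim disjE conjE)
  assume "\<forall>z\<in>I. f z < 0"
  then have "\<forall>n\<in>N. - b n \<le> - a n"
    using solutions_le_if_rhs_pos[OF solves_uminus[OF assms(2)] solves_uminus[OF assms(1)]] by simp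
  then show ?thesis by simp
qed (use assms solutions_le_if_rhs_pos solutions_le_if_rhs_zero in blast)+

lemma solves_cong: "solves f g a \<Longrightarrow> \<forall>n\<in>N. b n = a n \<Longrightarrow> solves f g b"
  using interior_nodes_subset interp_cong[of b a]
  by (auto simp: solves_def lap_def upper_def lower_def)

theorem P1_sweep_iterates_converge:
  assumes unique: "\<And>a b. solves f g a \<Longrightarrow> solves f g b \<Longrightarrow> \<forall>n\<in>N. a n \<le> b n"
    and P1: "\<And>k. u k \<in> P1 M"
    and step: "\<And>k. \<forall>n\<in>N. u (Suc k) n = sweep f g (u k) n"
  shows "(\<exists>w. discrete_solution \<Omega> M \<epsilon> S f g w) \<and>
    (\<forall>w. discrete_solution \<Omega> M \<epsilon> S f g w \<longrightarrow> uniform_limit UNIV u w sequentially)"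
proof
  obtain a where a: "solves f g a" "\<forall>n\<in>N. (\<lambda>k. u k n) \<longlonglongrightarrow> a n"
    using sweep_iterates_converge[where f=f and g=g and u=u, OF unique step] by blast
  have "solves f g (interp a)" using solves_cong[OF a(1)] interp_node by blast
  then show "\<exists>w. discrete_solution \<Omega> M \<epsilon> S f g w"
    using interp_in_P1 discrete_solution_iff by blast
  show "\<forall>w. discrete_solution \<Omega> M \<epsilon> S f g w \<longrightarrow> uniform_limit UNIV u w sequentially"
  proof (intro allI impI)
    fix w assume "discrete_solution \<Omega> M \<epsilon> S f g w"
    then have w: "w \<in> P1 M" "solves f g w" using discrete_solution_iff by blast+
    then have "\<forall>n\<in>N. w n = a n" using unique[OF w(2) a(1)] unique[OF a(1) w(2)] by force
    then show "uniform_limit UNIV u w sequentially"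
      using interp_uniform_limit[OF P1 w(1)] a(2) by simp
  qed
qed

end

theorem theorem6p1:
  fixes \<Omega> :: "'a::euclidean_space set"
    and M :: "'a set set"
    and \<epsilon> \<theta> :: real
    and S :: "'a set"
    and f g :: "'a \<Rightarrow> real"
    and gt :: "real \<Rightarrow> 'a \<Rightarrow> real"
    and u :: "nat \<Rightarrow> 'a \<Rightarrow> real"
  assumes dom: "open \<Omega>" "connected \<Omega>" "bounded \<Omega>" "\<Omega> \<noteq> {}" "continuous_boundary \<Omega>"
    and mesh: "conforming_mesh M"
      "inner_set \<Omega> (mesh_size M) \<subseteq> mesh_domain M" "mesh_domain M \<subseteq> \<Omega>"
    and params: "mesh_size M \<le> \<epsilon>" "\<epsilon> \<le> diameter \<Omega>" "0 < \<theta>" "\<theta> \<le> 1" "theta_net S \<theta>"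
    and RHS1: "continuous_on \<Omega> f" "bounded (f ` \<Omega>)"
    and RHS2: "(SUP x\<in>\<Omega>. f x) < 0 \<or> (INF x\<in>\<Omega>. f x) > 0 \<or> (\<forall>x\<in>\<Omega>. f x = 0)"
    and BC1: "continuous_on (frontier \<Omega>) g"
    and BC2: "\<forall>e>0. continuous_on (closure \<Omega>) (gt e)"
      "\<forall>\<alpha>\<in>{0..1}. holder_on \<alpha> (frontier \<Omega>) g \<longrightarrow>
          (\<forall>e>0. holder_on \<alpha> (closure \<Omega>) (gt e)) \<and>
          (\<exists>C. \<forall>e>0. \<forall>x\<in>frontier \<Omega>. \<bar>g x - gt e x\<bar> \<le> C * e powr \<alpha>)"
    and M1: "(\<forall>x\<in>\<Omega>. f x = 0) \<longrightarrow> cond_M1 \<Omega> M \<epsilon> S"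
    and init: "u 0 \<in> P1 M" "\<forall>z\<in>boundary_nodes \<Omega> M \<epsilon>. u 0 z = gt \<epsilon> z"
    and iter: "\<forall>n. u (Suc n) \<in> P1 M \<and>
       (\<forall>z\<in>interior_nodes \<Omega> M \<epsilon>. u (Suc n) z =
          (\<epsilon>\<^sup>2 * f z + Max (u n ` stencil \<epsilon> S z) + Min (u n ` stencil \<epsilon> S z)) / 2) \<and>
       (\<forall>z\<in>boundary_nodes \<Omega> M \<epsilon>. u (Suc n) z = gt \<epsilon> z)"
  shows "(\<exists>w. discrete_solution \<Omega> M \<epsilon> S f (gt \<epsilon>) w) \<and>
         (\<forall>w. discrete_solution \<Omega> M \<epsilon> S f (gt \<epsilon>) w \<longrightarrow> uniform_limit UNIV u w sequentially)"
proof -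
  interpret stencil_scheme M \<Omega> \<epsilon> S
    using mesh(1) mesh_size_pos[OF mesh(1)] params(1,5) theta_net_nonempty[OF params(5)]
    by unfold_locales (auto simp: theta_net_def)
  have P1: "u k \<in> P1 M" for k using init(1) iter by (cases k) auto
  have step: "\<forall>n\<in>N. u (Suc k) n = sweep f (gt \<epsilon>) (u k) n" for k
    using iter P1[of k] by (auto simp: sweep_def upper_P1 lower_P1 boundary_nodes_def)
  have "I \<subseteq> \<Omega>" by (auto simp: interior_nodes_def inner_set_def)
  then have "(\<forall>z\<in>I. 0 < f z) \<or> (\<forall>z\<in>I. f z < 0) \<or> ((\<forall>z\<in>I. f z = 0) \<and> cond_M1 \<Omega> M \<epsilon> S)"
    using RHS2 M1 cSUP_lessD[of f \<Omega> 0] less_cINF_D[of f \<Omega> 0]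
      bounded_imp_bdd_above[OF RHS1(2)] bounded_imp_bdd_below[OF RHS1(2)] by blast
  then have "\<forall>n\<in>N. a n \<le> b n" if "solves f (gt \<epsilon>) a" "solves f (gt \<epsilon>) b" for a b
    using solutions_le that by blast
  then show ?thesis using P1_sweep_iterates_converge[where u=u, OF _ P1 step] by blast
qed

end
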